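(* Let $U$ take values in a finite set $\mathcal{U}$ with $|\mathcal{U}|=L\ge2$ and let $Q$ take values in a finite alphabet. Then \[K^{(L)}(U|Q)\le1-\frac{2}{L-1}P_e^{(L)}(U|Q).\]
   Context: With $P_Q$ and $P_{U|Q}$ the marginal and conditional laws: $K^{(L)}(U|Q)=\sum_q\sum_{u'\ne u}\frac{P_Q(q)}{L-1}\cdot\frac{|P_{U|Q}(u|q)-P_{U|Q}(u'|q)|}{2}$, where the inner sum ranges over ordered pairs $(u,u')\in\mathcal{U}^2$ with $u'\ne u$; and $P_e^{(L)}(U|Q)=\sum_qP_Q(q)\big(1-\max_uP_{U|Q}(u|q)\big)$. *)

theory Defs
  imports "HOL-Probability.Probability"
begin

text \<open>Joint law of (U,Q) given as a pmf on 'u \<times> 'q, with 'u, 'q finite alphabets.\<close>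

definition PQ :: "('u::finite \<times> 'q::finite) pmf \<Rightarrow> 'q \<Rightarrow> real" where
  "PQ p q = (\<Sum>u\<in>UNIV. pmf p (u, q))"

definition PUQ :: "('u::finite \<times> 'q::finite) pmf \<Rightarrow> 'u \<Rightarrow> 'q \<Rightarrow> real" where
  "PUQ p u q = pmf p (u, q) / PQ p q"

definition KL :: "('u::finite \<times> 'q::finite) pmf \<Rightarrow> real" where
  "KL p = (\<Sum>q\<in>UNIV. \<Sum>u\<in>UNIV. \<Sum>u'\<in>UNIV - {u}.
      PQ p q / (real CARD('u) - 1) * (\<bar>PUQ p u q - PUQ p u' q\<bar> / 2))"

definition PeL :: "('u::finite \<times> 'q::finite) pmf \<Rightarrow> real" where
  "PeL p = (\<Sum>q\<in>UNIV. PQ p q * (1 - Max (range (\<lambda>u. PUQ p u q))))"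

end

theory Submission
  imports Defs
begin

text \<open>Fix q, write x = P_{U|Q}(.|q), and let u0 be a most likely value of U.
  Over ordered pairs u \<noteq> v, |x u - x v| = x u + x v - 2 min (x u) (x v); the terms
  x u + x v add up to 2(L-1). The minimum is x v on the pairs (u0, v) and x u on the
  pairs (u, u0), so the minima add up to at least 2(1 - x u0). Hence the inner sum of K
  is at most 2(L-1) - 4(1 - max x), and averaging over Q gives the claim.\<close>

lemma sum_ordered_pairs_add:
  fixes x :: "'u::finite \<Rightarrow> real"
  shows "(\<Sum>u\<in>UNIV. \<Sum>v\<in>UNIV - {u}. x u + x v) = 2 * (real CARD('u) - 1) * (\<Sum>u\<in>UNIV. x u)"
proof -
  have "(\<Sum>v\<in>UNIV - {u}. x u + x v) = (real CARD('u) - 1) * x u + ((\<Sum>w\<in>UNIV. x w) - x u)"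
    for u
    by (simp add: sum.distrib sum_diff1 card_Diff_singleton of_nat_diff Suc_leI)
  then have "(\<Sum>u\<in>UNIV. \<Sum>v\<in>UNIV - {u}. x u + x v)
      = (real CARD('u) - 1) * (\<Sum>u\<in>UNIV. x u) + (real CARD('u) * (\<Sum>w\<in>UNIV. x w) - (\<Sum>u\<in>UNIV. x u))"
    by (simp add: sum.distrib sum_subtractf sum_distrib_left)
  then show ?thesis
    by (simp add: algebra_simps)
qed

lemma sum_ordered_pairs_min_ge:
  fixes x :: "'u::finite \<Rightarrow> real"
  assumes nonneg: "\<And>u. x u \<ge> 0" and max: "\<And>v. x v \<le> x u0"
  shows "2 * ((\<Sum>u\<in>UNIV. x u) - x u0) \<le> (\<Sum>u\<in>UNIV. \<Sum>v\<in>UNIV - {u}. min (x u) (x v))"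
proof -
  have rest: "(\<Sum>v\<in>UNIV - {u0}. x v) = (\<Sum>u\<in>UNIV. x u) - x u0"
    by (simp add: sum_diff1)
  have inner: "(if u = u0 then (\<Sum>u\<in>UNIV. x u) - x u0 else x u)
      \<le> (\<Sum>v\<in>UNIV - {u}. min (x u) (x v))" for u
  proof (cases "u = u0")
    case True
    then have "(\<Sum>v\<in>UNIV - {u}. min (x u) (x v)) = (\<Sum>v\<in>UNIV - {u0}. x v)"
      using max by (intro sum.cong) (auto simp: min_absorb2)
    then show ?thesis using True rest by simp
  next
    case False
    have "(\<Sum>v\<in>{u0}. min (x u) (x v)) \<le> (\<Sum>v\<in>UNIV - {u}. min (x u) (x v))"
      using False nonneg by (intro sum_mono2) auto
    then show ?thesis using False max by (simp add: min_def)
  qed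
  have "(\<Sum>u\<in>UNIV. if u = u0 then (\<Sum>u\<in>UNIV. x u) - x u0 else x u)
      = ((\<Sum>u\<in>UNIV. x u) - x u0) + (\<Sum>u\<in>UNIV - {u0}. x u)"
    by (simp add: sum.remove[of UNIV u0])
  also have "\<dots> = 2 * ((\<Sum>u\<in>UNIV. x u) - x u0)"
    using rest by simp
  finally have "(\<Sum>u\<in>UNIV. if u = u0 then (\<Sum>u\<in>UNIV. x u) - x u0 else x u)
      = 2 * ((\<Sum>u\<in>UNIV. x u) - x u0)" .
  moreover have "(\<Sum>u\<in>UNIV. if u = u0 then (\<Sum>u\<in>UNIV. x u) - x u0 else x u)
      \<le> (\<Sum>u\<in>UNIV. \<Sum>v\<in>UNIV - {u}. min (x u) (x v))"
    using inner by (intro sum_mono)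
  ultimately show ?thesis
    by simp
qed

lemma sum_ordered_pairs_abs_diff_le:
  fixes x :: "'u::finite \<Rightarrow> real"
  assumes "\<And>u. x u \<ge> 0" and "\<And>v. x v \<le> x u0"
  shows "(\<Sum>u\<in>UNIV. \<Sum>v\<in>UNIV - {u}. \<bar>x u - x v\<bar>)
    \<le> 2 * (real CARD('u) - 1) * (\<Sum>u\<in>UNIV. x u) - 4 * ((\<Sum>u\<in>UNIV. x u) - x u0)"
proof -
  have "\<bar>x u - x v\<bar> = (x u + x v) - 2 * min (x u) (x v)" for u v
    by auto
  then have "(\<Sum>u\<in>UNIV. \<Sum>v\<in>UNIV - {u}. \<bar>x u - x v\<bar>)
      = (\<Sum>u\<in>UNIV. \<Sum>v\<in>UNIV - {u}. x u + x v)
        - 2 * (\<Sum>u\<in>UNIV. \<Sum>v\<in>UNIV - {u}. min (x u) (x v))"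
    by (simp add: sum_subtractf sum_distrib_left)
  then show ?thesis
    using sum_ordered_pairs_add[of x] sum_ordered_pairs_min_ge[of x u0, OF assms] by simp
qed

lemma PQ_nonneg: "PQ p q \<ge> 0"
  unfolding PQ_def by (simp add: sum_nonneg)

lemma sum_PQ: "(\<Sum>q\<in>UNIV. PQ p q) = 1"
proof -
  have "(\<Sum>q\<in>UNIV. PQ p q) = (\<Sum>z\<in>UNIV \<times> UNIV. pmf p z)"
    unfolding PQ_def by (subst sum.swap) (simp add: sum.cartesian_product)
  also have "\<dots> = 1"
    by (simp add: sum_pmf_eq_1)
  finally show ?thesis .
qed

lemma PUQ_nonneg: "PUQ p u q \<ge> 0"
  unfolding PUQ_def using PQ_nonneg[of p q] by simp

lemma sum_PUQ: "PQ p q \<noteq> 0 \<Longrightarrow> (\<Sum>u\<in>UNIV. PUQ p u q) = 1"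
  unfolding PUQ_def by (simp add: sum_divide_distrib[symmetric] PQ_def)

lemma PUQ_Max_attained: "\<exists>u0. PUQ p u0 q = Max (range (\<lambda>u. PUQ p u q))"
proof -
  have "Max (range (\<lambda>u. PUQ p u q)) \<in> range (\<lambda>u. PUQ p u q)"
    by (rule Max_in) auto
  then show ?thesis
    by (metis (no_types, lifting) rangeE)
qed

lemma KL_eq_sum_pairs:
  "KL p = (\<Sum>q\<in>UNIV. PQ p q / (real CARD('u) - 1) / 2
      * (\<Sum>u\<in>UNIV. \<Sum>v\<in>UNIV - {u}. \<bar>PUQ p u q - PUQ p v q\<bar>))"
  for p :: "('u::finite \<times> 'q::finite) pmf"
  unfolding KL_def by (simp add: sum_distrib_left)

lemma KL_summand_le:
  fixes p :: "('u::finite \<times> 'q::finite) pmf"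
  assumes "CARD('u) \<ge> 2"
  shows "PQ p q / (real CARD('u) - 1) / 2
      * (\<Sum>u\<in>UNIV. \<Sum>v\<in>UNIV - {u}. \<bar>PUQ p u q - PUQ p v q\<bar>)
    \<le> PQ p q * (1 - 2 / (real CARD('u) - 1) * (1 - Max (range (\<lambda>u. PUQ p u q))))"
proof (cases "PQ p q = 0")
  case True
  then show ?thesis by simp
next
  case False
  define L where "L = real CARD('u)"
  define m where "m = Max (range (\<lambda>u. PUQ p u q))"
  have L1: "L - 1 > 0"
    using assms unfolding L_def by simp
  obtain u0 where u0: "PUQ p u0 q = m"
    using PUQ_Max_attained unfolding m_def by blast
  have "PUQ p v q \<le> PUQ p u0 q" for v
    unfolding u0 m_def by (rule Max_ge) auto
  then have pairs: "(\<Sum>u\<in>UNIV. \<Sum>v\<in>UNIV - {u}. \<bar>PUQ p u q - PUQ p v q\<bar>) \<le> 2 * (L - 1) - 4 * (1 - m)"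
    using sum_ordered_pairs_abs_diff_le[of "\<lambda>u. PUQ p u q" u0, OF PUQ_nonneg]
    by (simp add: sum_PUQ[OF False] u0 L_def)
  have "PQ p q / (L - 1) / 2 * (\<Sum>u\<in>UNIV. \<Sum>v\<in>UNIV - {u}. \<bar>PUQ p u q - PUQ p v q\<bar>)
      \<le> PQ p q / (L - 1) / 2 * (2 * (L - 1) - 4 * (1 - m))"
    using pairs L1 PQ_nonneg[of p q] by (intro mult_left_mono) auto
  also have "\<dots> = PQ p q * (1 - 2 / (L - 1) * (1 - m))"
    using L1 by (simp add: field_simps)
  finally show ?thesis
    unfolding L_def m_def .
qed

theorem lemma10:
  fixes p :: "('u::finite \<times> 'q::finite) pmf"
  assumes "CARD('u) \<ge> 2"
  shows "KL p \<le> 1 - 2 / (real CARD('u) - 1) * PeL p"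
proof -
  define c where "c = 2 / (real CARD('u) - 1)"
  define m where "m q = Max (range (\<lambda>u. PUQ p u q))" for q
  have "KL p \<le> (\<Sum>q\<in>UNIV. PQ p q * (1 - c * (1 - m q)))"
    unfolding KL_eq_sum_pairs c_def m_def
    by (intro sum_mono KL_summand_le assms)
  also have "\<dots> = (\<Sum>q\<in>UNIV. PQ p q - c * (PQ p q * (1 - m q)))"
    by (simp add: algebra_simps)
  also have "\<dots> = (\<Sum>q\<in>UNIV. PQ p q) - c * (\<Sum>q\<in>UNIV. PQ p q * (1 - m q))"
    by (simp only: sum_subtractf sum_distrib_left)
  also have "\<dots> = 1 - c * PeL p"
    unfolding sum_PQ PeL_def m_def ..
  finally show ?thesis
    unfolding c_def .
qed

end
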